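(* Let $G$ be a line graph with vertex order $v_1,\ldots,v_n$, let $D$ be a minimal dominating set of $G$, let $u,w\in D$ be adjacent, let $v\in P_D(u)$, and let $X_{uv}$, $D^*$, $Z_{uv}$ be as in the context. Then: $X_{uv}=\emptyset$; each vertex of $Z_{uv}$ is adjacent to exactly one vertex of $P_{D^*}(v)\setminus N[u]$; and each vertex of $P_{D^*}(v)\setminus N[u]$ is adjacent to exactly one vertex of $Z_{uv}$.
   Context: Graphs are finite, simple, undirected; $N(x)$ is the open and $N[x]=N(x)\cup\{x\}$ the closed neighborhood, $N[S]=\bigcup_{x\in S}N[x]$. A line graph is a graph isomorphic to $L(H)$ for some graph $H$, where $L(H)$ has vertex set $E(H)$ and two vertices are adjacent iff the edges share an endpoint. A dominating set is $D\subseteq V(G)$ with $N[D]=V(G)$; it is minimal if no proper subset is dominating. For a dominating set $D$ and $x\in D$, a vertex $y$ is private for $x$ if $y\in N[x]\setminus N[D\setminus\{x\}]$; $P_D[x]$ is the set of such $y$ and $P_D(x)=P_D[x]\cap N(x)$. Fix an order $v_1,\ldots,v_n$ of $V(G)$. Greedy removal from a dominating set $D'$: while the current set $S$ is not a minimal dominating set, remove from $S$ the vertex $v_i$ of smallest index such that $S\setminus\{v_i\}$ is still dominating. Given $D,u,v$: $X_{uv}$ is built by starting from $\emptyset$ and repeatedly adding the smallest-index vertex of $P_D(u)\setminus N[\{v\}\cup X_{uv}]$ while this set is nonempty. Let $D'=(D\setminus\{u\})\cup X_{uv}\cup\{v\}$, let $D^*$ be the result of greedy removal from $D'$, and $Z_{uv}=D'\setminus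 D^*$. *)

theory Defs
  imports Main
begin

text \<open>A finite simple undirected graph is given by a vertex list vs (distinct; its
  order is the fixed vertex order v_1,...,v_n) and an adjacency relation E on set vs.\<close>

definition simple_graph :: "'a list \<Rightarrow> ('a \<Rightarrow> 'a \<Rightarrow> bool) \<Rightarrow> bool" where
  "simple_graph vs E \<longleftrightarrow> distinct vs \<and>
     (\<forall>x y. E x y \<longrightarrow> x \<in> set vs \<and> y \<in> set vs \<and> x \<noteq> y \<and> E y x)"

text \<open>Line graph: G is isomorphic to L(H) for a simple graph H; the vertex x of G
  corresponds to the edge g x (a 2-element set of vertices of H, labelled by naturals).\<close>

definition line_graph :: "'a set \<Rightarrow> ('a \<Rightarrow> 'a \<Rightarrow> bool) \<Rightarrow> bool" where
  "line_graph V E \<longleftrightarrow> (\<exists>g :: 'a \<Rightarrow> nat set. inj_on g V \<and> (\<forall>x\<in>V. card (g x) = 2) \<and>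
     (\<forall>x\<in>V. \<forall>y\<in>V. E x y \<longleftrightarrow> x \<noteq> y \<and> g x \<inter> g y \<noteq> {}))"

definition open_nbhd :: "'a set \<Rightarrow> ('a \<Rightarrow> 'a \<Rightarrow> bool) \<Rightarrow> 'a \<Rightarrow> 'a set" where
  "open_nbhd V E x = {y \<in> V. E x y}"

definition closed_nbhd :: "'a set \<Rightarrow> ('a \<Rightarrow> 'a \<Rightarrow> bool) \<Rightarrow> 'a \<Rightarrow> 'a set" where
  "closed_nbhd V E x = insert x (open_nbhd V E x)"

definition closed_nbhd_set :: "'a set \<Rightarrow> ('a \<Rightarrow> 'a \<Rightarrow> bool) \<Rightarrow> 'a set \<Rightarrow> 'a set" where
  "closed_nbhd_set V E S = (\<Union>x\<in>S. closed_nbhd V E x)"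

definition dominating :: "'a set \<Rightarrow> ('a \<Rightarrow> 'a \<Rightarrow> bool) \<Rightarrow> 'a set \<Rightarrow> bool" where
  "dominating V E D \<longleftrightarrow> D \<subseteq> V \<and> closed_nbhd_set V E D = V"

definition minimal_dominating :: "'a set \<Rightarrow> ('a \<Rightarrow> 'a \<Rightarrow> bool) \<Rightarrow> 'a set \<Rightarrow> bool" where
  "minimal_dominating V E D \<longleftrightarrow> dominating V E D \<and> (\<forall>D'. D' \<subset> D \<longrightarrow> \<not> dominating V E D')"

definition priv_closed :: "'a set \<Rightarrow> ('a \<Rightarrow> 'a \<Rightarrow> bool) \<Rightarrow> 'a set \<Rightarrow> 'a \<Rightarrow> 'a set" where
  "priv_closed V E D x = closed_nbhd V E x - closed_nbhd_set V E (D - {x})"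

definition priv_open :: "'a set \<Rightarrow> ('a \<Rightarrow> 'a \<Rightarrow> bool) \<Rightarrow> 'a set \<Rightarrow> 'a \<Rightarrow> 'a set" where
  "priv_open V E D x = priv_closed V E D x \<inter> open_nbhd V E x"

text \<open>One step of greedy removal: if S is not a minimal dominating set, remove the
  smallest-index v in S with S - {v} dominating (smallest index = first in vs).\<close>
definition greedy_step :: "'a list \<Rightarrow> ('a \<Rightarrow> 'a \<Rightarrow> bool) \<Rightarrow> 'a set \<Rightarrow> 'a set" where
  "greedy_step vs E S =
     (if minimal_dominating (set vs) E S then S
      else (case find (\<lambda>x. x \<in> S \<and> dominating (set vs) E (S - {x})) vs of
              None \<Rightarrow> S
            | Some x \<Rightarrow> S - {x}))"

text \<open>Each effective step removes one vertex, so card S iterations suffice to run the loop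
  to completion.\<close>
definition greedy_removal :: "'a list \<Rightarrow> ('a \<Rightarrow> 'a \<Rightarrow> bool) \<Rightarrow> 'a set \<Rightarrow> 'a set" where
  "greedy_removal vs E S = (greedy_step vs E ^^ card S) S"

text \<open>Construction of X_uv: repeatedly add the smallest-index vertex of
  P_D(u) - N[{v} \<union> X]; each step adds a new vertex, so length vs iterations suffice.\<close>
definition X_step :: "'a list \<Rightarrow> ('a \<Rightarrow> 'a \<Rightarrow> bool) \<Rightarrow> 'a set \<Rightarrow> 'a \<Rightarrow> 'a \<Rightarrow> 'a set \<Rightarrow> 'a set" where
  "X_step vs E D u v X =
     (case find (\<lambda>y. y \<in> priv_open (set vs) E D u - closed_nbhd_set (set vs) E (insert v X)) vs of
        None \<Rightarrow> X
      | Some y \<Rightarrow> insert y X)"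

definition X_uv :: "'a list \<Rightarrow> ('a \<Rightarrow> 'a \<Rightarrow> bool) \<Rightarrow> 'a set \<Rightarrow> 'a \<Rightarrow> 'a \<Rightarrow> 'a set" where
  "X_uv vs E D u v = (X_step vs E D u v ^^ length vs) {}"

end

theory Submission
  imports Defs
begin

text \<open>Let G = L(H), each vertex x of G being an edge g x of H. Since u meets w, every private
  neighbour of u contains the end of u outside w, as v does; hence X_uv is empty and D' = D - u + v
  dominates. For y in P_{D*}(v) - N[u] let c be its end outside v. No member of D' through c survives
  in D*, and the minimality of D forces that exactly one member z of D' passes through c: when the
  greedy removal deletes the last such member, its other end is covered by a kept neighbour, so a
  second member through c would make it redundant in D. This z is the unique neighbour of y in Z_uv.
  Conversely a removed z has a private vertex with respect to D, which lies in P_{D*}(v) - N[u]; and z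
  has no second such neighbour, since then both ends of z would be ends outside v of such vertices,
  and nothing kept could have dominated z when it was removed.\<close>

lemma mem_closed_nbhd_iff: "p \<in> closed_nbhd V E x \<longleftrightarrow> p = x \<or> (p \<in> V \<and> E x p)"
  by (auto simp: closed_nbhd_def open_nbhd_def)

lemma mem_closed_nbhd_set_iff:
  "p \<in> closed_nbhd_set V E S \<longleftrightarrow> (\<exists>x\<in>S. p = x \<or> (p \<in> V \<and> E x p))"
  by (auto simp: closed_nbhd_set_def mem_closed_nbhd_iff)

lemma mem_priv_open_iff:
  "p \<in> priv_open V E D x \<longleftrightarrow> p \<in> V \<and> E x p \<and> (\<forall>x'\<in>D - {x}. p \<noteq> x' \<and> \<not> E x' p)"
  by (auto simp: priv_open_def priv_closed_def mem_closed_nbhd_set_iff mem_closed_nbhd_iff open_nbhd_def)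

lemma closed_nbhd_set_subset: "S \<subseteq> V \<Longrightarrow> closed_nbhd_set V E S \<subseteq> V"
  by (auto simp: mem_closed_nbhd_set_iff)

lemma dominating_iff: "dominating V E S \<longleftrightarrow> S \<subseteq> V \<and> (\<forall>p\<in>V. \<exists>x\<in>S. p = x \<or> E x p)"
proof -
  have "closed_nbhd_set V E S = V \<longleftrightarrow> V \<subseteq> closed_nbhd_set V E S" if "S \<subseteq> V"
    using closed_nbhd_set_subset[OF that] by blast
  then show ?thesis unfolding dominating_def subset_iff[of V] mem_closed_nbhd_set_iff by blast
qed

lemma minimal_dominating_priv_closed_nonempty:
  assumes "minimal_dominating V E D" and "z \<in> D"
  shows "priv_closed V E D z \<noteq> {}"
proof
  assume "priv_closed V E D z = {}"
  then have "closed_nbhd V E z \<subseteq> closed_nbhd_set V E (D - {z})"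
    by (simp add: priv_closed_def)
  then have "closed_nbhd_set V E D = closed_nbhd_set V E (D - {z})"
    using \<open>z \<in> D\<close> by (auto simp: closed_nbhd_set_def)
  then have "dominating V E (D - {z})"
    using assms(1) by (auto simp: minimal_dominating_def dominating_def)
  moreover have "D - {z} \<subset> D" using \<open>z \<in> D\<close> by blast
  ultimately show False using assms(1) by (auto simp: minimal_dominating_def)
qed

lemma dominating_swap:
  assumes "dominating V E D" and "v \<in> V" and "priv_closed V E D u \<subseteq> closed_nbhd V E v"
  shows "dominating V E (insert v (D - {u}))"
  unfolding dominating_def
proof
  show "insert v (D - {u}) \<subseteq> V" using assms(1,2) by (auto simp: dominating_def)
  then have "closed_nbhd_set V E (insert v (D - {u})) \<subseteq> V" by (rule closed_nbhd_set_subset)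
  moreover have "V \<subseteq> closed_nbhd_set V E (insert v (D - {u}))"
  proof
    fix p assume "p \<in> V"
    then have "p \<in> closed_nbhd_set V E (D - {u}) \<or> p \<in> priv_closed V E D u"
      using assms(1) by (auto simp: dominating_def priv_closed_def closed_nbhd_set_def)
    then show "p \<in> closed_nbhd_set V E (insert v (D - {u}))"
      using assms(3) by (auto simp: closed_nbhd_set_def)
  qed
  ultimately show "closed_nbhd_set V E (insert v (D - {u})) = V" by blast
qed

lemma greedy_step_cases:
  "greedy_step vs E S = S \<or>
   (\<exists>x\<in>S. dominating (set vs) E (S - {x}) \<and> greedy_step vs E S = S - {x})"
proof (cases "find (\<lambda>x. x \<in> S \<and> dominating (set vs) E (S - {x})) vs")
  case None
  then show ?thesis by (simp add: greedy_step_def)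
next
  case (Some x)
  then have "x \<in> S \<and> dominating (set vs) E (S - {x})" by (auto simp: find_Some_iff)
  with Some show ?thesis by (auto simp: greedy_step_def)
qed

lemma greedy_iterate_subset: "(greedy_step vs E ^^ n) S \<subseteq> S"
proof (induction n)
  case 0
  then show ?case by simp
next
  case (Suc n)
  then show ?case using greedy_step_cases[of vs E "(greedy_step vs E ^^ n) S"] by auto
qed

lemma greedy_iterate_dominating:
  "dominating (set vs) E S \<Longrightarrow> dominating (set vs) E ((greedy_step vs E ^^ n) S)"
proof (induction n)
  case 0
  then show ?case by simp
next
  case (Suc n)
  let ?T = "(greedy_step vs E ^^ n) S"
  have "dominating (set vs) E (greedy_step vs E ?T)"
    using greedy_step_cases[of vs E ?T] Suc by metis
  then show ?case by simp
qed

lemma greedy_iterate_last_removed: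
  assumes "A \<inter> (greedy_step vs E ^^ n) S = {}" and "A \<inter> S \<noteq> {}"
  shows "\<exists>S' z. S' \<subseteq> S \<and> S' \<inter> A = {z} \<and> dominating (set vs) E (S' - {z})"
  using assms(1)
proof (induction n)
  case 0
  with assms(2) show ?case by simp
next
  case (Suc n)
  let ?T = "(greedy_step vs E ^^ n) S"
  show ?case
  proof (cases "A \<inter> ?T = {}")
    case True
    then show ?thesis by (rule Suc.IH)
  next
    case False
    with Suc.prems have "greedy_step vs E ?T \<noteq> ?T" by auto
    then obtain x where x: "x \<in> ?T" "dominating (set vs) E (?T - {x})"
        "greedy_step vs E ?T = ?T - {x}"
      using greedy_step_cases[of vs E ?T] by blast
    have "?T \<inter> A = {x}" using False Suc.prems x(3) by auto
    with x(2) greedy_iterate_subset[where n=n and S=S] show ?thesis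
      by (intro exI[of _ ?T] exI[of _ x]) simp
  qed
qed

lemma X_uv_eq_empty:
  assumes "priv_open (set vs) E D u \<subseteq> closed_nbhd (set vs) E v"
  shows "X_uv vs E D u v = {}"
proof -
  have "X_step vs E D u v {} = {}"
    using assms by (auto simp: X_step_def find_None_iff closed_nbhd_set_def split: option.split)
  then have "(X_step vs E D u v ^^ n) {} = {}" for n by (induction n) auto
  then show ?thesis by (simp add: X_uv_def)
qed

locale edge_labelling =
  fixes V :: "'a set" and E :: "'a \<Rightarrow> 'a \<Rightarrow> bool" and g :: "'a \<Rightarrow> 'b set"
  assumes inj_labels: "inj_on g V"
    and card_labels: "x \<in> V \<Longrightarrow> card (g x) = 2"
    and adj_iff: "x \<in> V \<Longrightarrow> y \<in> V \<Longrightarrow> E x y \<longleftrightarrow> x \<noteq> y \<and> g x \<inter> g y \<noteq> {}"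
begin

lemma adj_sym: "x \<in> V \<Longrightarrow> y \<in> V \<Longrightarrow> E x y \<Longrightarrow> E y x"
  using adj_iff[of x y] adj_iff[of y x] by blast

lemma labels_eq_pair:
  assumes "x \<in> V" "a \<in> g x" "b \<in> g x" "a \<noteq> b"
  shows "g x = {a, b}"
proof -
  obtain p q where "g x = {p, q}" using card_labels[OF assms(1)] unfolding card_2_iff by blast
  with assms(2-4) show ?thesis by auto
qed

lemma eq_if_two_common_labels:
  assumes "x \<in> V" "y \<in> V" "a \<in> g x \<inter> g y" "b \<in> g x \<inter> g y" "a \<noteq> b"
  shows "x = y"
proof -
  have "g x = g y"
    using labels_eq_pair[of x a b] labels_eq_pair[of y a b] assms by simp
  then show ?thesis using inj_onD[OF inj_labels] assms(1,2) by blast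
qed

lemma labels_diff_singleton_if_adj:
  assumes "x \<in> V" "y \<in> V" "E x y"
  shows "\<exists>c. g y - g x = {c}"
proof -
  obtain a where a: "a \<in> g x" "a \<in> g y" using adj_iff[OF assms(1,2)] assms(3) by blast
  obtain c where c: "c \<in> g y" "c \<noteq> a"
    using card_labels[OF assms(2)] a(2) unfolding card_2_iff by blast
  have "x \<noteq> y" using adj_iff[OF assms(1,2)] assms(3) by blast
  then have "c \<notin> g x" using eq_if_two_common_labels[OF assms(1,2), of a c] a c by blast
  moreover have "g y = {a, c}" using labels_eq_pair[OF assms(2) a(2) c(1)] c(2) by simp
  ultimately have "g y - g x = {c}" using a(1) c(2) by auto
  then show ?thesis ..
qed

text \<open>Every edge of H meeting u but not w contains the end of u outside w.\<close>
lemma open_nbhd_diff_closed_nbhd_clique: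
  assumes "u \<in> V" "w \<in> V" "E u w"
    and "y \<in> open_nbhd V E u - closed_nbhd V E w" "y' \<in> open_nbhd V E u - closed_nbhd V E w"
  shows "y' \<in> closed_nbhd V E y"
proof -
  have "E w u" using adj_sym[OF assms(1-3)] .
  then obtain c where c: "g u - g w = {c}" using labels_diff_singleton_if_adj[OF assms(2,1)] by blast
  have "c \<in> g y'" if "y' \<in> open_nbhd V E u - closed_nbhd V E w" for y'
  proof -
    have y': "y' \<in> V" "E u y'" "\<not> E w y'" "y' \<noteq> w"
      using that by (auto simp: open_nbhd_def closed_nbhd_def)
    then obtain a where "a \<in> g u" "a \<in> g y'" "a \<notin> g w"
      using adj_iff[OF assms(1) y'(1)] adj_iff[OF assms(2) y'(1)] by auto
    then show ?thesis using c by auto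
  qed
  then have "c \<in> g y" "c \<in> g y'" using assms(4,5) by blast+
  moreover have "y \<in> V" "y' \<in> V" using assms(4,5) by (simp_all add: open_nbhd_def)
  ultimately show ?thesis using adj_iff[of y y'] by (auto simp: mem_closed_nbhd_iff)
qed

lemma closed_nbhd_subset_if_labels_covered:
  assumes "z \<in> V" "x \<in> V" "x' \<in> V" "E x z" "g z \<subseteq> g x \<union> g x'"
  shows "closed_nbhd V E z \<subseteq> closed_nbhd_set V E {x, x'}"
proof
  fix p assume "p \<in> closed_nbhd V E z"
  then consider "p = z" | "p \<in> V" "g z \<inter> g p \<noteq> {}"
    using adj_iff[OF assms(1)] by (auto simp: mem_closed_nbhd_iff)
  then show "p \<in> closed_nbhd_set V E {x, x'}"
  proof cases
    case 1
    then show ?thesis using assms(1,4) by (auto simp: mem_closed_nbhd_set_iff)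
  next
    case 2
    then have "g x \<inter> g p \<noteq> {} \<or> g x' \<inter> g p \<noteq> {}" using assms(5) by blast
    then show ?thesis using 2 adj_iff[OF assms(2) 2(1)] adj_iff[OF assms(3) 2(1)]
      by (auto simp: mem_closed_nbhd_set_iff)
  qed
qed

end

locale private_swap = edge_labelling "set vs" E g
  for vs :: "'a list" and E :: "'a \<Rightarrow> 'a \<Rightarrow> bool" and g :: "'a \<Rightarrow> 'b set" +
  fixes D :: "'a set" and u w v :: 'a
  assumes minimal: "minimal_dominating (set vs) E D"
    and u_in_D: "u \<in> D" and w_in_D: "w \<in> D" and adj_uw: "E u w"
    and v_priv: "v \<in> priv_open (set vs) E D u"
begin

text \<open>D' is the paper's D' because X_uv is empty (X_uv_empty); label_class e collects the members
  of D' whose edge of H contains the vertex e of H.\<close>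

definition D' :: "'a set" where "D' = insert v (D - {u})"

definition Dstar :: "'a set" where "Dstar = greedy_removal vs E D'"

definition Z :: "'a set" where "Z = D' - Dstar"

definition P :: "'a set" where "P = priv_open (set vs) E Dstar v - closed_nbhd (set vs) E u"

definition label_class :: "'b \<Rightarrow> 'a set" where "label_class e = {x \<in> D'. e \<in> g x}"

lemma D_subset: "D \<subseteq> set vs"
  using minimal by (simp add: minimal_dominating_def dominating_def)

lemma v_in_V: "v \<in> set vs" and adj_uv: "E u v"
  using v_priv by (simp_all add: mem_priv_open_iff)

lemma not_adj_v: "x \<in> D - {u} \<Longrightarrow> x \<noteq> v \<and> \<not> E x v"
  using v_priv by (auto simp: mem_priv_open_iff)

lemma labels_disjoint_v:
  assumes "x \<in> D - {u}" shows "g x \<inter> g v = {}"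
proof -
  have "x \<in> set vs" using assms D_subset by blast
  with adj_iff[OF this v_in_V] not_adj_v[OF assms] show ?thesis by blast
qed

lemma priv_closed_u_subset: "priv_closed (set vs) E D u \<subseteq> closed_nbhd (set vs) E v"
proof
  fix y assume y: "y \<in> priv_closed (set vs) E D u"
  have uw: "u \<in> set vs" "w \<in> set vs" "w \<in> D - {u}"
    using D_subset u_in_D w_in_D adj_iff[of u w] adj_uw by auto
  have "E w u" using adj_sym[OF uw(1,2) adj_uw] .
  then have "u \<in> closed_nbhd_set (set vs) E (D - {u})"
    using uw by (auto simp: mem_closed_nbhd_set_iff)
  then have "y \<in> open_nbhd (set vs) E u - closed_nbhd (set vs) E w"
    using y uw(3) by (auto simp: priv_closed_def closed_nbhd_def closed_nbhd_set_def)
  moreover have "v \<in> open_nbhd (set vs) E u - closed_nbhd (set vs) E w"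
    using v_priv uw(3) by (auto simp: priv_open_def priv_closed_def closed_nbhd_set_def)
  ultimately show "y \<in> closed_nbhd (set vs) E v"
    using open_nbhd_diff_closed_nbhd_clique[OF uw(1,2) adj_uw] by blast
qed

lemma X_uv_empty: "X_uv vs E D u v = {}"
  using priv_closed_u_subset by (intro X_uv_eq_empty) (auto simp: priv_open_def)

lemma D'_dominating: "dominating (set vs) E D'"
  unfolding D'_def using minimal v_in_V priv_closed_u_subset
  by (intro dominating_swap) (simp_all add: minimal_dominating_def)

lemma Dstar_subset: "Dstar \<subseteq> D'"
  unfolding Dstar_def greedy_removal_def by (rule greedy_iterate_subset)

lemma Dstar_dominating: "dominating (set vs) E Dstar"
  unfolding Dstar_def greedy_removal_def by (rule greedy_iterate_dominating[OF D'_dominating])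

lemma v_in_Dstar: "v \<in> Dstar"
proof -
  obtain x where x: "x \<in> Dstar" "v = x \<or> E x v"
    using Dstar_dominating v_in_V by (auto simp: dominating_iff)
  then have "x \<notin> D - {u}" using not_adj_v by blast
  then show ?thesis using x Dstar_subset by (auto simp: D'_def)
qed

lemma Z_subset: "Z \<subseteq> D - {u}"
  using v_in_Dstar by (auto simp: Z_def D'_def)

lemma label_class_subset: "e \<notin> g v \<Longrightarrow> label_class e \<subseteq> D - {u}"
  by (auto simp: label_class_def D'_def)

lemma mem_P_iff: "y \<in> P \<longleftrightarrow>
    y \<in> set vs \<and> E v y \<and> (\<forall>x\<in>Dstar - {v}. y \<noteq> x \<and> \<not> E x y) \<and> y \<noteq> u \<and> \<not> E u y"
  by (auto simp: P_def mem_priv_open_iff mem_closed_nbhd_iff)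

lemma label_class_disjoint_Dstar:
  assumes "y \<in> P" "e \<in> g y" "e \<notin> g v"
  shows "label_class e \<inter> Dstar = {}"
proof (rule ccontr)
  assume "label_class e \<inter> Dstar \<noteq> {}"
  then obtain x where x: "x \<in> label_class e" "x \<in> Dstar" by blast
  then have "x \<in> D - {u}" "e \<in> g x" using label_class_subset assms(3) by (auto simp: label_class_def)
  moreover have "y \<in> set vs" using assms(1) by (simp add: mem_P_iff)
  ultimately have "x = y \<or> E x y"
    using adj_iff[of x y] D_subset assms(2) by blast
  moreover have "x \<noteq> v" using x assms(3) by (auto simp: label_class_def)
  ultimately show False using assms(1) x(2) by (auto simp: mem_P_iff)
qed

text \<open>Otherwise D would stay dominating without z: the end e of z is covered by another member of
  the class, and the other end by the neighbour x that dominates z in S - {z}.\<close>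
lemma label_class_singleton_if_last_removed:
  assumes "e \<notin> g v" "S \<subseteq> D'" "S \<inter> label_class e = {z}" "dominating (set vs) E (S - {z})"
  shows "label_class e = {z}"
proof (rule ccontr)
  assume "label_class e \<noteq> {z}"
  moreover have zA: "z \<in> label_class e" using assms(3) by blast
  ultimately obtain z' where z': "z' \<in> label_class e" "z' \<noteq> z" by blast
  have z: "z \<in> D - {u}" "z \<in> set vs" "e \<in> g z"
    using zA label_class_subset[OF assms(1)] D_subset by (auto simp: label_class_def)
  obtain x where x: "x \<in> S - {z}" "E x z"
    using assms(4) z(2) by (auto simp: dominating_iff)
  have xV: "x \<in> set vs" using x(1) assms(4) by (auto simp: dominating_def)
  have "x \<notin> label_class e" using x(1) assms(3) by blast
  then have ex: "e \<notin> g x" using x(1) assms(2) by (auto simp: label_class_def)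
  obtain h where h: "h \<in> g x" "h \<in> g z" using adj_iff[OF xV z(2)] x(2) by blast
  have "x \<noteq> v" using h labels_disjoint_v[OF z(1)] by blast
  then have xD: "x \<in> D - {z}" using x(1) assms(2) by (auto simp: D'_def)
  have z'D: "z' \<in> D - {z}" "z' \<in> set vs" "e \<in> g z'"
    using z' label_class_subset[OF assms(1)] D_subset by (auto simp: label_class_def)
  have "g z = {e, h}" using labels_eq_pair[OF z(2) z(3) h(2)] ex h(1) by blast
  then have "g z \<subseteq> g x \<union> g z'" using h(1) z'D(3) by simp
  then have "closed_nbhd (set vs) E z \<subseteq> closed_nbhd_set (set vs) E {x, z'}"
    by (rule closed_nbhd_subset_if_labels_covered[OF z(2) xV z'D(2) x(2)])
  also have "\<dots> \<subseteq> closed_nbhd_set (set vs) E (D - {z})"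
    using xD z'D(1) by (auto simp: closed_nbhd_set_def)
  finally have "priv_closed (set vs) E D z = {}" by (simp add: priv_closed_def)
  then show False using minimal_dominating_priv_closed_nonempty[OF minimal] z(1) by blast
qed

lemma removed_label_class:
  assumes "y \<in> P" "e \<in> g y" "e \<notin> g v" "z \<in> D'" "e \<in> g z"
  shows "label_class e = {z}" and "\<exists>S \<subseteq> D'. z \<in> S \<and> dominating (set vs) E (S - {z})"
proof -
  have "label_class e \<inter> (greedy_step vs E ^^ card D') D' = {}"
    using label_class_disjoint_Dstar[OF assms(1-3)] by (simp add: Dstar_def greedy_removal_def)
  moreover have "label_class e \<inter> D' \<noteq> {}" using assms(4,5) by (auto simp: label_class_def)
  ultimately obtain S z0 where S: "S \<subseteq> D'" "S \<inter> label_class e = {z0}"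
      "dominating (set vs) E (S - {z0})"
    using greedy_iterate_last_removed by metis
  then have "label_class e = {z0}" by (intro label_class_singleton_if_last_removed[OF assms(3)])
  moreover have "z \<in> label_class e" using assms(4,5) by (simp add: label_class_def)
  ultimately have "z0 = z" by simp
  with \<open>label_class e = {z0}\<close> show "label_class e = {z}" by simp
  from S \<open>z0 = z\<close> show "\<exists>S \<subseteq> D'. z \<in> S \<and> dominating (set vs) E (S - {z})" by blast
qed

lemma label_outside_v_shared:
  assumes "x \<in> D - {u}" "y \<in> set vs" "E x y" "g y - g v = {c}"
  shows "c \<in> g x"
proof -
  have "x \<in> set vs" using assms(1) D_subset by blast
  then obtain a where "a \<in> g x" "a \<in> g y" using adj_iff[OF _ assms(2)] assms(3) by blast
  moreover have "a \<notin> g v" using \<open>a \<in> g x\<close> labels_disjoint_v[OF assms(1)] by blast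
  ultimately show ?thesis using assms(4) by (metis DiffI singletonD)
qed

text \<open>A vertex of P is the edge of H joining the end of v outside u to a vertex outside v.\<close>
lemma P_eq_if_same_label_outside_v:
  assumes "y \<in> P" "y' \<in> P" "g y - g v = {c}" "g y' - g v = {c}"
  shows "y = y'"
proof -
  have uV: "u \<in> set vs" using u_in_D D_subset by blast
  obtain b where b: "g v - g u = {b}" using labels_diff_singleton_if_adj[OF uV v_in_V adj_uv] by blast
  have "b \<in> g x" if "x \<in> P" for x
  proof -
    have x: "x \<in> set vs" "E v x" "x \<noteq> u" "\<not> E u x" using that by (auto simp: mem_P_iff)
    then obtain a where "a \<in> g v" "a \<in> g x" using adj_iff[OF v_in_V x(1)] by blast
    moreover have "a \<notin> g u" using \<open>a \<in> g x\<close> adj_iff[OF uV x(1)] x(3,4) by blast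
    ultimately show ?thesis using b by (metis DiffI singletonD)
  qed
  moreover have "b \<noteq> c" using b assms(3) by blast
  ultimately show ?thesis
    using eq_if_two_common_labels[of y y' b c] assms by (auto simp: mem_P_iff)
qed

lemma P_adj_unique_Z:
  assumes "y \<in> P"
  shows "\<exists>!z. z \<in> Z \<and> E y z"
proof -
  have y: "y \<in> set vs" "E v y" "y \<noteq> u" "\<not> E u y" using assms by (auto simp: mem_P_iff)
  obtain x where x: "x \<in> D" "y = x \<or> E x y"
    using minimal y(1) by (auto simp: minimal_dominating_def dominating_iff)
  then have xD: "x \<in> D - {u}" using y(3,4) by blast
  moreover have "x \<in> set vs" using x(1) D_subset by blast
  ultimately have "E x y" using x(2) not_adj_v adj_sym[OF v_in_V y(1) y(2)] by blast
  moreover have "x \<notin> Dstar" using assms \<open>E x y\<close> xD not_adj_v by (auto simp: mem_P_iff)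
  ultimately have "x \<in> Z \<and> E y x" using xD adj_sym[OF \<open>x \<in> set vs\<close> y(1)] by (auto simp: Z_def D'_def)
  moreover have "z = z'" if "z \<in> Z" "E y z" "z' \<in> Z" "E y z'" for z z'
  proof -
    obtain c where c: "g y - g v = {c}" using labels_diff_singleton_if_adj[OF v_in_V y(1,2)] by blast
    have zD: "z \<in> D - {u}" "z' \<in> D - {u}" using that Z_subset by blast+
    have "z \<in> set vs" "z' \<in> set vs" using zD D_subset by blast+
    then have "c \<in> g z" "c \<in> g z'"
      using label_outside_v_shared zD y(1) adj_sym that c by blast+
    then have "label_class c = {z}" "z' \<in> label_class c"
      using removed_label_class(1)[OF assms, of c z] c that(1,3) by (auto simp: Z_def label_class_def)
    then show ?thesis by simp
  qed
  ultimately show ?thesis by blast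
qed

lemma Z_has_P_neighbour:
  assumes "z \<in> Z"
  shows "\<exists>y. y \<in> P \<and> E z y"
proof -
  have z: "z \<in> D - {u}" "z \<notin> Dstar" using assms Z_subset by (auto simp: Z_def)
  obtain p where p: "p \<in> priv_closed (set vs) E D z"
    using minimal_dominating_priv_closed_nonempty[OF minimal] z(1) by blast
  have uDz: "u \<in> D - {z}" using u_in_D z(1) by blast
  have pV: "p \<in> set vs" and p_private: "\<forall>x\<in>D - {z}. p \<noteq> x \<and> \<not> E x p"
    using p z(1) D_subset by (auto simp: priv_closed_def mem_closed_nbhd_iff mem_closed_nbhd_set_iff)
  have Dstar_v: "Dstar - {v} \<subseteq> D - {z}" using Dstar_subset z(2) by (auto simp: D'_def)
  obtain x where x: "x \<in> Dstar" "p = x \<or> E x p"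
    using Dstar_dominating pV by (auto simp: dominating_iff)
  then have "x = v" using Dstar_v p_private by blast
  moreover have "p \<noteq> v" using p_private uDz adj_uv by blast
  ultimately have "E v p" using x(2) by blast
  then have "p \<in> P" using pV p_private Dstar_v uDz by (auto simp: mem_P_iff)
  moreover have "p \<noteq> z" using \<open>E v p\<close> not_adj_v[OF z(1)] adj_sym[OF v_in_V pV] by blast
  then have "E z p" using p by (auto simp: priv_closed_def mem_closed_nbhd_iff)
  ultimately show ?thesis by blast
qed

lemma Z_adj_unique_P:
  assumes "z \<in> Z"
  shows "\<exists>!y. y \<in> P \<and> E z y"
proof (rule ex_ex1I)
  show "\<exists>y. y \<in> P \<and> E z y" using Z_has_P_neighbour[OF assms] .
next
  fix y y' assume y: "y \<in> P \<and> E z y" and y': "y' \<in> P \<and> E z y'"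
  have zD: "z \<in> D - {u}" "z \<in> D'" "z \<in> set vs" using assms Z_subset D_subset by (auto simp: Z_def)
  have "\<exists>c. g x - g v = {c} \<and> c \<in> g x \<and> c \<notin> g v \<and> c \<in> g z" if "x \<in> P" "E z x" for x
  proof -
    have "x \<in> set vs" "E v x" using that(1) by (auto simp: mem_P_iff)
    then obtain c where c: "g x - g v = {c}" using labels_diff_singleton_if_adj[OF v_in_V] by blast
    then have "c \<in> g z" using label_outside_v_shared[OF zD(1) \<open>x \<in> set vs\<close> that(2)] by blast
    then show ?thesis using c by blast
  qed
  then obtain c c' where c: "g y - g v = {c}" "c \<in> g y" "c \<notin> g v" "c \<in> g z"
      and c': "g y' - g v = {c'}" "c' \<in> g y'" "c' \<notin> g v" "c' \<in> g z"
    using y y' by meson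
  show "y = y'"
  proof (cases "c = c'")
    case True
    then show ?thesis using P_eq_if_same_label_outside_v y y' c(1) c'(1) by blast
  next
    case False
    txt \<open>Then g z = {c, c'}, so the neighbour x dominating z in S - {z} lies in the label class of
      c or of c', both of which are {z}.\<close>
    obtain S where S: "S \<subseteq> D'" "dominating (set vs) E (S - {z})"
      using removed_label_class(2)[OF _ c(2,3) zD(2) c(4)] y by blast
    obtain x where x: "x \<in> S - {z}" "E x z" using S(2) zD(3) by (auto simp: dominating_iff)
    have xV: "x \<in> set vs" using x(1) S(2) by (auto simp: dominating_def)
    have "g z = {c, c'}" using labels_eq_pair[OF zD(3) c(4) c'(4) False] .
    moreover obtain a where "a \<in> g x" "a \<in> g z" using adj_iff[OF xV zD(3)] x(2) by blast
    ultimately have "x \<in> label_class c \<union> label_class c'" using x(1) S(1) by (auto simp: label_class_def)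
    moreover have "label_class c = {z}" "label_class c' = {z}"
      using removed_label_class(1) y y' c c' zD(2) by blast+
    ultimately show ?thesis using x(1) by blast
  qed
qed

end

theorem lemma4:
  fixes vs :: "'a list" and E :: "'a \<Rightarrow> 'a \<Rightarrow> bool" and D :: "'a set" and u w v :: 'a
  assumes "simple_graph vs E"
    and "line_graph (set vs) E"
    and "minimal_dominating (set vs) E D"
    and "u \<in> D" and "w \<in> D" and "E u w"
    and "v \<in> priv_open (set vs) E D u"
  defines "X \<equiv> X_uv vs E D u v"
  defines "D' \<equiv> (D - {u}) \<union> X \<union> {v}"
  defines "Dstar \<equiv> greedy_removal vs E D'"
  defines "Z \<equiv> D' - Dstar"
  shows "X = {}
    \<and> (\<forall>z\<in>Z. \<exists>!y. y \<in> priv_open (set vs) E Dstar v - closed_nbhd (set vs) E u \<and> E z y)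
    \<and> (\<forall>y\<in>priv_open (set vs) E Dstar v - closed_nbhd (set vs) E u. \<exists>!z. z \<in> Z \<and> E y z)"
proof -
  have "\<exists>g :: 'a \<Rightarrow> nat set. edge_labelling (set vs) E g"
    using assms(2) unfolding line_graph_def edge_labelling_def by (simp add: Ball_def)
  then obtain g :: "'a \<Rightarrow> nat set" where g: "edge_labelling (set vs) E g" ..
  interpret swap: private_swap vs E g D u w v
    by (rule private_swap.intro[OF g private_swap_axioms.intro[OF assms(3-7)]])
  have "X = {}" unfolding X_def by (rule swap.X_uv_empty)
  then have "D' = swap.D'" "Dstar = swap.Dstar" "Z = swap.Z"
    by (auto simp: D'_def Dstar_def Z_def swap.D'_def swap.Dstar_def swap.Z_def)
  moreover have "priv_open (set vs) E Dstar v - closed_nbhd (set vs) E u = swap.P"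
    using \<open>Dstar = swap.Dstar\<close> by (simp add: swap.P_def)
  ultimately show ?thesis
    using \<open>X = {}\<close> swap.Z_adj_unique_P swap.P_adj_unique_Z by simp
qed

end
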